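(* Let $K$ be a finite field of characteristic $p$, let $L$ be a finite extension of $K$ such that $[L:K]$ is a power of a prime $\ell\neq p$, and let $d$ be an integer with $\gcd(d,|L|-1)=1$. Let $1/d$ denote an integer that is a multiplicative inverse of $d$ modulo $p-1$, and regard $[L:K]$ as a (nonzero) element of $\mathbb{F}_p\subseteq K$. Then for every $a\in K$, $$W_{L,d}(a)\equiv W_{K,d}\big([L:K]^{1-1/d}a\big)\pmod{\ell},$$ where the congruence means that the difference is $\ell$ times an algebraic integer.
   Context: For a finite field $F$ of characteristic $p$, $\psi_F(x)=\exp(2\pi i\,\mathrm{Tr}_{F/\mathbb{F}_p}(x)/p)$; for a field $F$ with $\gcd(d,|F|-1)=1$ and $a\in F$, $W_{F,d}(a)=\sum_{x\in F}\psi_F(x^d+ax)$. *)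

theory Defs
  imports "HOL-Analysis.Analysis" "HOL-Computational_Algebra.Polynomial" "HOL-Number_Theory.Cong"
begin

definition is_subfield :: "'a::field set \<Rightarrow> bool" where
  "is_subfield K \<longleftrightarrow> 0 \<in> K \<and> 1 \<in> K \<and>
     (\<forall>x\<in>K. \<forall>y\<in>K. x + y \<in> K \<and> x * y \<in> K) \<and>
     (\<forall>x\<in>K. - x \<in> K \<and> inverse x \<in> K)"

definition prime_deg :: "'a::{finite,field} set \<Rightarrow> nat" where
  "prime_deg F = (THE m. card F = CHAR('a) ^ m)"

text \<open>Degree [L:K] of the ambient finite field L = UNIV over a subfield K.\<close>
definition ext_deg :: "'a::{finite,field} set \<Rightarrow> nat" where
  "ext_deg K = (THE n. CARD('a) = card K ^ n)"

definition ftrace :: "'a::{finite,field} set \<Rightarrow> 'a \<Rightarrow> 'a" where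
  "ftrace F x = (\<Sum>i<prime_deg F. x ^ (CHAR('a) ^ i))"

text \<open>The canonical additive character psi_F(x) = exp(2 pi i Tr(x)/p), where the trace,
  an element of the prime field, is identified with its representative in {0..p-1}.\<close>
definition fpsi :: "'a::{finite,field} set \<Rightarrow> 'a \<Rightarrow> complex" where
  "fpsi F x = exp (2 * of_real pi * \<i> *
      of_nat (SOME t. t < CHAR('a) \<and> of_nat t = ftrace F x) / of_nat CHAR('a))"

definition Wsum :: "'a::{finite,field} set \<Rightarrow> int \<Rightarrow> 'a \<Rightarrow> complex" where
  "Wsum F d a = (\<Sum>x\<in>F. fpsi F (x powi d + a * x))"

end

theory Submission
  imports Defs "HOL-Computational_Algebra.Primes" "HOL-Combinatorics.Orbits" "Jordan_Normal_Form.Char_Poly"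
begin

text \<open>
  Split \<open>W\<^sub>L(a)\<close> into the sums over \<open>K\<close> and over \<open>L - K\<close>.
  The Frobenius \<open>\<phi>(x) = x ^ |K|\<close> has order \<open>[L:K] = \<ell> ^ k\<close>, permutes \<open>L - K\<close>
  without fixed points and does not change the trace of \<open>x ^ d + a x\<close>. Hence every orbit
  has length divisible by \<open>\<ell>\<close>, and the sum over \<open>L - K\<close> is \<open>\<ell>\<close> times an integral
  combination of \<open>p\<close>-th roots of unity, an algebraic integer.
  On \<open>K\<close> the traces are related by \<open>Tr\<^sub>L(y) = Tr\<^sub>K([L:K] y)\<close>, and the substitution
  \<open>x = [L:K] ^ (-1/d) y\<close> turns the sum over \<open>K\<close> into \<open>W\<^sub>K([L:K] ^ (1 - 1/d) a)\<close>.
\<close>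

section \<open>Subfields and their subspaces\<close>

definition is_subspace_over :: "'a::field set \<Rightarrow> 'a set \<Rightarrow> bool" where
  "is_subspace_over K V \<longleftrightarrow>
     0 \<in> V \<and> (\<forall>x\<in>V. \<forall>y\<in>V. x + y \<in> V) \<and> (\<forall>c\<in>K. \<forall>x\<in>V. c * x \<in> V)"

lemma is_subspace_overI:
  assumes "0 \<in> V" "\<And>x y. x \<in> V \<Longrightarrow> y \<in> V \<Longrightarrow> x + y \<in> V"
    and "\<And>c x. c \<in> K \<Longrightarrow> x \<in> V \<Longrightarrow> c * x \<in> V"
  shows "is_subspace_over K V"
  using assms unfolding is_subspace_over_def by blast

lemma
  assumes "is_subspace_over K V"
  shows subspace_over_0: "0 \<in> V"
    and subspace_over_add: "x \<in> V \<Longrightarrow> y \<in> V \<Longrightarrow> x + y \<in> V"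
    and subspace_over_scale: "c \<in> K \<Longrightarrow> x \<in> V \<Longrightarrow> c * x \<in> V"
  using assms unfolding is_subspace_over_def by auto

context
  fixes K :: "'a::field set"
  assumes K: "is_subfield K"
begin

lemma
  shows subfield_0: "0 \<in> K"
    and subfield_1: "1 \<in> K"
    and subfield_add: "x \<in> K \<Longrightarrow> y \<in> K \<Longrightarrow> x + y \<in> K"
    and subfield_mult: "x \<in> K \<Longrightarrow> y \<in> K \<Longrightarrow> x * y \<in> K"
    and subfield_uminus: "x \<in> K \<Longrightarrow> - x \<in> K"
    and subfield_inverse: "x \<in> K \<Longrightarrow> inverse x \<in> K"
  using K unfolding is_subfield_def by auto

lemma subfield_diff: "x \<in> K \<Longrightarrow> y \<in> K \<Longrightarrow> x - y \<in> K"
  by (metis diff_conv_add_uminus subfield_add subfield_uminus)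

lemma subfield_divide: "x \<in> K \<Longrightarrow> y \<in> K \<Longrightarrow> x / y \<in> K"
  by (simp add: divide_inverse subfield_inverse subfield_mult)

lemma subfield_power: "x \<in> K \<Longrightarrow> x ^ n \<in> K"
  by (induction n) (auto intro: subfield_1 subfield_mult)

lemma subfield_power_int: "x \<in> K \<Longrightarrow> x powi n \<in> K"
  by (auto simp: power_int_def intro: subfield_power subfield_inverse)

lemma subfield_of_nat: "of_nat n \<in> K"
  by (induction n) (auto intro: subfield_0 subfield_1 subfield_add)

lemma subspace_over_adjoin:
  assumes V: "is_subspace_over K V"
  shows "is_subspace_over K ((\<lambda>(x, c). x + c * v) ` (V \<times> K))"
proof (rule is_subspace_overI)
  let ?f = "\<lambda>(x, c). x + c * v"
  show "0 \<in> ?f ` (V \<times> K)"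
    using subspace_over_0[OF V] subfield_0 by (intro image_eqI[of _ _ "(0, 0)"]) auto
  fix y z assume "y \<in> ?f ` (V \<times> K)" "z \<in> ?f ` (V \<times> K)"
  then obtain x1 c1 x2 c2 where "x1 \<in> V" "c1 \<in> K" "x2 \<in> V" "c2 \<in> K"
    and "y = x1 + c1 * v" "z = x2 + c2 * v" by auto
  moreover from this have "y + z = ?f (x1 + x2, c1 + c2)"
    by (simp add: algebra_simps)
  ultimately show "y + z \<in> ?f ` (V \<times> K)"
    by (intro image_eqI[of _ _ "(x1 + x2, c1 + c2)"]) (auto intro: subspace_over_add[OF V] subfield_add)
next
  let ?f = "\<lambda>(x, c). x + c * v"
  fix c y assume "c \<in> K" "y \<in> ?f ` (V \<times> K)"
  then obtain x c1 where "x \<in> V" "c1 \<in> K" "y = x + c1 * v" by auto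
  moreover from this have "c * y = ?f (c * x, c * c1)"
    by (simp add: algebra_simps)
  ultimately show "c * y \<in> ?f ` (V \<times> K)"
    using \<open>c \<in> K\<close> by (intro image_eqI[of _ _ "(c * x, c * c1)"]) (auto intro: subspace_over_scale[OF V] subfield_mult)
qed

lemma card_subspace_over_adjoin:
  assumes V: "is_subspace_over K V" and v: "v \<notin> V"
  shows "card ((\<lambda>(x, c). x + c * v) ` (V \<times> K)) = card V * card K"
proof -
  have "inj_on (\<lambda>(x, c). x + c * v) (V \<times> K)"
  proof (rule inj_onI, clarify)
    fix x c x' c' assume xc: "x \<in> V" "c \<in> K" "x' \<in> V" "c' \<in> K" "x + c * v = x' + c' * v"
    show "x = x' \<and> c = c'"
    proof (cases "c = c'")
      case False
      have "(c - c') * v = x' - x"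
        using arg_cong[OF xc(5), of "\<lambda>t. t - x - c' * v"] by (simp add: algebra_simps)
      then have "v = (x' - x) / (c - c')"
        using False by (simp add: eq_divide_eq mult.commute)
      then have "v = (1 / (c - c')) * x' + (- 1 / (c - c')) * x"
        by (simp add: diff_divide_distrib)
      moreover have "(1 / (c - c')) * x' + (- 1 / (c - c')) * x \<in> V"
        using xc by (intro subspace_over_add[OF V] subspace_over_scale[OF V])
          (auto intro: subfield_divide subfield_diff subfield_1 subfield_uminus)
      ultimately have "v \<in> V" by simp
      with v show ?thesis by blast
    qed (use xc in simp)
  qed
  then show ?thesis by (simp add: card_image card_cartesian_product)
qed

end

lemma card_subspace_over:
  fixes K V :: "'a::{finite,field} set"
  assumes K: "is_subfield K" and V: "is_subspace_over K V"
  shows "\<exists>n. card V = card K ^ n"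
proof -
  have "\<exists>n. card V = card K ^ n"
    if "is_subspace_over K W" "W \<subseteq> V" "card W = card K ^ j" for W j
    using that
  proof (induction "card V - card W" arbitrary: W j rule: less_induct)
    case less
    show ?case
    proof (cases "W = V")
      case False
      with less.prems obtain v where v: "v \<in> V" "v \<notin> W" by blast
      define W' where "W' = (\<lambda>(x, c). x + c * v) ` (W \<times> K)"
      have "W \<subseteq> W'"
        unfolding W'_def using subfield_0[OF K] by (auto intro: image_eqI[of _ _ "(x, 0)" for x])
      moreover have "v \<in> W'"
        unfolding W'_def using subspace_over_0[OF less.prems(1)] subfield_1[OF K]
        by (intro image_eqI[of _ _ "(0, 1)"]) auto
      moreover have "W' \<subseteq> V"
        unfolding W'_def using less.prems(2) v(1)
        by (auto intro: subspace_over_add[OF V] subspace_over_scale[OF V])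
      ultimately have "card W < card W'" "card W' \<le> card V"
        using v(2) by (auto intro: psubset_card_mono card_mono)
      then have "card V - card W' < card V - card W" by linarith
      moreover have "card W' = card K ^ Suc j"
        using card_subspace_over_adjoin[OF K less.prems(1) v(2)] less.prems(3) W'_def by simp
      ultimately show ?thesis
        using less.hyps subspace_over_adjoin[OF K less.prems(1)] \<open>W' \<subseteq> V\<close> W'_def by blast
    qed (use less.prems in blast)
  qed
  moreover have "is_subspace_over K {0}" "{0} \<subseteq> V" "card {0} = card K ^ 0"
    using subspace_over_0[OF V] by (auto intro: is_subspace_overI)
  ultimately show ?thesis by blast
qed

section \<open>Finite fields\<close>

lemma subfield_if_finite_closed:
  fixes S :: "'a::field set"
  assumes fin: "finite S" and "0 \<in> S" "1 \<in> S"
    and add: "\<And>x y. x \<in> S \<Longrightarrow> y \<in> S \<Longrightarrow> x + y \<in> S"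
    and mult: "\<And>x y. x \<in> S \<Longrightarrow> y \<in> S \<Longrightarrow> x * y \<in> S"
  shows "is_subfield S"
  unfolding is_subfield_def
proof (intro conjI ballI)
  fix x assume x: "x \<in> S"
  have "(\<lambda>y. x + y) ` S = S"
    using x by (intro endo_inj_surj fin) (auto intro: add)
  then obtain y where "y \<in> S" "x + y = 0"
    using \<open>0 \<in> S\<close> by (metis imageE)
  then show "- x \<in> S"
    by (simp add: minus_unique)
  show "inverse x \<in> S"
  proof (cases "x = 0")
    case False
    have "(\<lambda>y. x * y) ` S = S"
      using x False by (intro endo_inj_surj fin) (auto intro: mult inj_onI)
    then obtain y where "y \<in> S" "x * y = 1"
      using \<open>1 \<in> S\<close> by (metis imageE)
    then show ?thesis by (simp add: inverse_unique)
  qed (use \<open>0 \<in> S\<close> in simp)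
qed (use assms in auto)

lemma CHAR_prime: "prime CHAR('a::{finite,field})"
  by (intro prime_CHAR_semidom finite_imp_CHAR_pos) simp

lemma subfield_range_of_nat: "is_subfield (range (of_nat :: nat \<Rightarrow> 'a::{finite,field}))"
  by (rule subfield_if_finite_closed)
    (auto simp flip: of_nat_add of_nat_mult intro: range_eqI[of _ _ 0] range_eqI[of _ _ 1])

lemma card_range_of_nat: "card (range (of_nat :: nat \<Rightarrow> 'a::{finite,field})) = CHAR('a)"
proof -
  have pos: "CHAR('a) > 0" using prime_gt_0_nat[OF CHAR_prime] .
  have "range (of_nat :: nat \<Rightarrow> 'a) = of_nat ` {..<CHAR('a)}"
  proof (intro equalityI subsetI)
    fix x :: 'a assume "x \<in> range of_nat"
    then obtain n where "x = of_nat n" by blast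
    then have "x = of_nat (n mod CHAR('a))"
      by (simp add: of_nat_eq_iff_cong_CHAR cong_def)
    then show "x \<in> of_nat ` {..<CHAR('a)}" using pos by auto
  qed auto
  moreover have "inj_on (of_nat :: nat \<Rightarrow> 'a) {..<CHAR('a)}"
    by (intro inj_onI) (auto simp: of_nat_eq_iff_cong_CHAR cong_def)
  ultimately show ?thesis by (simp add: card_image)
qed

lemma prime_deg_eqI:
  fixes F :: "'a::{finite,field} set"
  assumes "card F = CHAR('a) ^ m"
  shows "prime_deg F = m"
  unfolding prime_deg_def using assms prime_gt_1_nat[OF CHAR_prime[where 'a='a]]
  by (auto intro!: the_equality dest: power_inject_exp)

lemma card_subfield_eq_CHAR_power:
  fixes K :: "'a::{finite,field} set"
  assumes K: "is_subfield K"
  shows "card K = CHAR('a) ^ prime_deg K"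
proof -
  have "is_subspace_over (range of_nat) K"
    using K by (auto intro!: is_subspace_overI subfield_0 subfield_add subfield_mult subfield_of_nat)
  then obtain m where m: "card K = CHAR('a) ^ m"
    using card_subspace_over[OF subfield_range_of_nat] card_range_of_nat by metis
  then show ?thesis
    using prime_deg_eqI by metis
qed

lemma card_subfield_gt_1:
  fixes K :: "'a::{finite,field} set"
  assumes "is_subfield K"
  shows "card K > 1"
proof -
  have "card {0, 1::'a} \<le> card K"
    using assms by (intro card_mono) (auto intro: subfield_0 subfield_1)
  then show ?thesis by simp
qed

lemma CARD_eq_card_subfield_power:
  fixes K :: "'a::{finite,field} set"
  assumes K: "is_subfield K"
  shows "CARD('a) = card K ^ ext_deg K"
proof -
  have "is_subspace_over K UNIV" by (rule is_subspace_overI) auto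
  then obtain n where n: "CARD('a) = card K ^ n"
    using card_subspace_over[OF K] by blast
  have "ext_deg K = n"
    unfolding ext_deg_def using n card_subfield_gt_1[OF K]
    by (auto intro!: the_equality dest: power_inject_exp)
  with n show ?thesis by simp
qed

lemma subfield_UNIV: "is_subfield UNIV"
  unfolding is_subfield_def by simp

lemma subfield_power_card:
  fixes x :: "'a::{finite,field}"
  assumes K: "is_subfield K" and x: "x \<in> K"
  shows "x ^ card K = x"
proof (cases "x = 0")
  case True
  then show ?thesis using card_subfield_gt_1[OF K] by simp
next
  case False
  have "(\<Prod>y\<in>K - {0}. x * y) = (\<Prod>y\<in>K - {0}. y)"
    by (rule prod.reindex_bij_witness[of _ "\<lambda>y. y / x" "\<lambda>y. x * y"])
      (use False x in \<open>simp_all add: subfield_mult[OF K] subfield_divide[OF K]\<close>)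
  moreover have "(\<Prod>y\<in>K - {0}. x * y) = x ^ card (K - {0}) * (\<Prod>y\<in>K - {0}. y)"
    by (simp add: prod.distrib)
  moreover have "(\<Prod>y\<in>K - {0}. y) \<noteq> 0"
    by simp
  ultimately have "x ^ card (K - {0}) = 1"
    by (metis mult_cancel_right1)
  moreover have "card K = Suc (card (K - {0}))"
    using subfield_0[OF K] by (intro card.remove) auto
  ultimately show ?thesis by (metis power_Suc mult_1_right)
qed

lemma subfield_power_card_iff:
  fixes x :: "'a::{finite,field}"
  assumes K: "is_subfield K"
  shows "x ^ card K = x \<longleftrightarrow> x \<in> K"
proof
  assume x: "x ^ card K = x"
  define P :: "'a poly" where "P = monom 1 (card K) - [:0, 1:]"
  have "coeff P (card K) = 1"
    using card_subfield_gt_1[OF K] by (simp add: P_def coeff_monom coeff_pCons split: nat.split)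
  then have "P \<noteq> 0" by auto
  have roots: "{y. poly P y = 0} = {y. y ^ card K = y}"
    by (simp add: P_def poly_monom)
  have "card {y::'a. y ^ card K = y} = card {y. poly P y = 0}"
    by (simp add: roots)
  also have "\<dots> \<le> degree P"
    by (rule card_poly_roots_bound[OF \<open>P \<noteq> 0\<close>])
  also have "\<dots> \<le> card K"
    unfolding P_def using card_subfield_gt_1[OF K]
    by (intro degree_diff_le) (auto simp: degree_monom_le degree_pCons_eq_if)
  finally have "card {y::'a. y ^ card K = y} \<le> card K" .
  moreover have "K \<subseteq> {y. y ^ card K = y}"
    using subfield_power_card[OF K] by blast
  ultimately have "K = {y. y ^ card K = y}"
    by (simp add: card_seteq)
  with x show "x \<in> K" by blast
qed (rule subfield_power_card[OF K])

lemma subfield_power_card_power: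
  fixes x :: "'a::{finite,field}"
  assumes "is_subfield K" "x \<in> K"
  shows "x ^ (card K ^ j) = x"
  by (induction j) (simp_all add: power_mult subfield_power_card[OF assms])

section \<open>Frobenius and the absolute trace\<close>

lemma frobenius_add:
  "((x::'a::{finite,field}) + y) ^ (CHAR('a) ^ j) = x ^ (CHAR('a) ^ j) + y ^ (CHAR('a) ^ j)"
  by (rule freshmans_dream'[OF CHAR_prime refl])

lemma frobenius_of_nat: "(of_nat n :: 'a::{finite,field}) ^ (CHAR('a) ^ j) = of_nat n"
  using subfield_power_card_power[OF subfield_range_of_nat, of "of_nat n"]
  by (simp add: card_range_of_nat)

lemma sum_lessThan_Suc_shift_periodic:
  fixes f :: "nat \<Rightarrow> 'b::ab_group_add"
  assumes "f n = f 0"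
  shows "(\<Sum>i<n. f (Suc i)) = (\<Sum>i<n. f i)"
  using sum.lessThan_Suc_shift[of f n] sum.lessThan_Suc[of f n] assms
  by (metis add.commute add_left_imp_eq)

lemma sum_lessThan_mult_periodic:
  fixes f :: "nat \<Rightarrow> 'b::comm_semiring_1"
  assumes "\<And>i. f (i + m) = f i"
  shows "(\<Sum>i<m * n. f i) = of_nat n * (\<Sum>i<m. f i)"
proof (induction n)
  case (Suc n)
  have "(\<Sum>i<m + m * n. f i) = (\<Sum>i<m. f i) + (\<Sum>i<m * n. f (i + m))"
    by (simp add: sum.atLeastLessThan_shift_bounds lessThan_atLeast0 sum.atLeastLessThan_concat[symmetric]
        sum.shift_bounds_nat_ivl[of f 0 m "m * n", symmetric] add.commute)
  then show ?case
    by (simp add: assms Suc.IH algebra_simps)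
qed simp

lemma ftrace_UNIV_power_CHAR:
  "ftrace (UNIV::'a::{finite,field} set) (y ^ CHAR('a)) = ftrace UNIV y"
proof -
  let ?M = "prime_deg (UNIV::'a set)"
  have "y ^ (CHAR('a) ^ ?M) = y"
    using subfield_power_card[OF subfield_UNIV] card_subfield_eq_CHAR_power[OF subfield_UNIV]
    by (metis UNIV_I)
  then have "(\<Sum>i<?M. y ^ (CHAR('a) ^ Suc i)) = (\<Sum>i<?M. y ^ (CHAR('a) ^ i))"
    by (intro sum_lessThan_Suc_shift_periodic) simp
  then show ?thesis
    unfolding ftrace_def by (simp add: power_mult[symmetric] mult.commute)
qed

lemma ftrace_UNIV_power_CHAR_power:
  "ftrace (UNIV::'a::{finite,field} set) (y ^ (CHAR('a) ^ j)) = ftrace UNIV y"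
proof (induction j)
  case (Suc j)
  have "y ^ (CHAR('a) ^ Suc j) = (y ^ (CHAR('a) ^ j)) ^ CHAR('a)"
    by (simp add: power_mult[symmetric] mult.commute)
  then show ?case
    using Suc ftrace_UNIV_power_CHAR by metis
qed simp

lemma ftrace_UNIV_subfield:
  fixes K :: "'a::{finite,field} set"
  assumes K: "is_subfield K" and y: "y \<in> K"
  shows "ftrace UNIV y = ftrace K (of_nat (ext_deg K) * y)"
proof -
  let ?p = "CHAR('a)" and ?m = "prime_deg K" and ?n = "ext_deg K"
  have "prime_deg (UNIV::'a set) = ?m * ?n"
    using CARD_eq_card_subfield_power[OF K] card_subfield_eq_CHAR_power[OF K]
    by (intro prime_deg_eqI) (simp add: power_mult)
  moreover have "y ^ (?p ^ (i + ?m)) = y ^ (?p ^ i)" for i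
  proof -
    have "y ^ (?p ^ (i + ?m)) = (y ^ (?p ^ i)) ^ card K"
      by (simp add: card_subfield_eq_CHAR_power[OF K] power_add power_mult mult.commute)
    also have "\<dots> = y ^ (?p ^ i)"
      using subfield_power_card[OF K] subfield_power[OF K y] by blast
    finally show ?thesis .
  qed
  ultimately have "ftrace UNIV y = of_nat ?n * (\<Sum>i<?m. y ^ (?p ^ i))"
    unfolding ftrace_def by (simp add: sum_lessThan_mult_periodic)
  also have "\<dots> = ftrace K (of_nat ?n * y)"
    unfolding ftrace_def by (simp add: sum_distrib_left power_mult_distrib frobenius_of_nat)
  finally show ?thesis .
qed

section \<open>Orbits of a permutation of prime-power order\<close>

lemma self_in_orbit_if_funpow_eq:
  assumes "(f ^^ n) x = x" "n > 0"
  shows "x \<in> orbit f x"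
  unfolding orbit_altdef using assms by (auto intro!: exI[of _ n])

lemma prime_dvd_card_orbit:
  assumes l: "prime l" and period: "(f ^^ (l ^ k)) x = x" and moved: "f x \<noteq> x"
  shows "l dvd card (orbit f x)"
proof -
  have "l ^ k > 0" using l by (simp add: prime_gt_0_nat)
  with period have x: "x \<in> orbit f x"
    by (rule self_in_orbit_if_funpow_eq)
  define r where "r = funpow_dist1 f x x"
  have card: "card (orbit f x) = r"
    using orbit_conv_funpow_dist1[OF x] inj_on_funpow_dist1[OF x]
    by (simp add: card_image r_def)
  have "(f ^^ (l ^ k mod r)) x = (f ^^ (l ^ k)) x"
    unfolding r_def by (rule funpow_mod_eq[OF funpow_dist1_prop[OF x]])
  then have "(f ^^ (l ^ k mod r)) x = x"
    using period by simp
  then have "l ^ k mod r = 0"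
    using funpow_dist1_least[of _ f x x] unfolding r_def by (metis mod_less_divisor neq0_conv zero_less_Suc)
  then obtain j where "r = l ^ j"
    using divides_primepow_nat[OF l] by (metis mod_0_imp_dvd)
  moreover have "r \<noteq> 1"
  proof
    assume "r = 1"
    then have "(f ^^ 1) x = x"
      using funpow_dist1_prop[OF x] unfolding r_def by metis
    with moved show False by simp
  qed
  ultimately show ?thesis
    using card by (cases j) auto
qed

lemma prime_dvd_card_if_fixpoint_free:
  assumes "finite S" "prime l"
    and maps: "\<And>x. x \<in> S \<Longrightarrow> f x \<in> S"
    and period: "\<And>x. x \<in> S \<Longrightarrow> (f ^^ (l ^ k)) x = x"
    and moved: "\<And>x. x \<in> S \<Longrightarrow> f x \<noteq> x"
  shows "l dvd card S"
  using assms(1) maps period moved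
proof (induction "card S" arbitrary: S rule: less_induct)
  case less
  show ?case
  proof (cases "S = {}")
    case False
    then obtain x where x: "x \<in> S" by blast
    let ?O = "orbit f x"
    have "l ^ k > 0" using \<open>prime l\<close> by (simp add: prime_gt_0_nat)
    have "x \<in> ?O"
      using less.prems(3)[OF x] \<open>l ^ k > 0\<close> by (rule self_in_orbit_if_funpow_eq)
    have "?O \<subseteq> S"
    proof
      fix y assume "y \<in> ?O"
      then show "y \<in> S" by induction (use x less.prems(2) in auto)
    qed
    have rest: "f y \<in> S - ?O" if "y \<in> S - ?O" for y
    proof -
      have "(f ^^ (l ^ k - 1)) (f y) = (f ^^ Suc (l ^ k - 1)) y"
        by (simp only: funpow_Suc_right comp_apply)
      also have "\<dots> = y"
        using less.prems(3)[of y] that \<open>l ^ k > 0\<close> by simp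
      finally have "f y \<in> ?O \<Longrightarrow> y \<in> ?O" by (metis funpow_in_orbit)
      with that less.prems(2) show ?thesis by blast
    qed
    have "card (S - ?O) < card S"
      using \<open>x \<in> ?O\<close> x less.prems(1) by (intro psubset_card_mono) auto
    then have "l dvd card (S - ?O)"
      by (rule less.hyps) (use less.prems rest in auto)
    moreover have "l dvd card ?O"
      using prime_dvd_card_orbit[OF \<open>prime l\<close> less.prems(3,4)[OF x]] .
    moreover have "card S = card (S - ?O) + card ?O"
      using card_Diff_subset[OF finite_subset[OF \<open>?O \<subseteq> S\<close> less.prems(1)] \<open>?O \<subseteq> S\<close>]
        card_mono[OF less.prems(1) \<open>?O \<subseteq> S\<close>] by linarith
    ultimately show ?thesis by simp
  qed simp
qed

lemma sum_fixpoint_free_invariant: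
  fixes w :: "'c \<Rightarrow> 'd::comm_semiring_1"
  assumes fin: "finite S" and l: "prime l"
    and maps: "\<And>x. x \<in> S \<Longrightarrow> f x \<in> S"
    and period: "\<And>x. x \<in> S \<Longrightarrow> (f ^^ (l ^ k)) x = x"
    and moved: "\<And>x. x \<in> S \<Longrightarrow> f x \<noteq> x"
    and invariant: "\<And>x. x \<in> S \<Longrightarrow> t (f x) = t x"
  shows "(\<Sum>x\<in>S. w (t x)) = of_nat l * (\<Sum>j\<in>t ` S. of_nat (card {x\<in>S. t x = j} div l) * w j)"
proof -
  have "l dvd card {x\<in>S. t x = j}" for j
    using fin l maps period moved invariant
    by (intro prime_dvd_card_if_fixpoint_free[where f = f and k = k]) auto
  then have "of_nat (card {x\<in>S. t x = j}) = (of_nat l * of_nat (card {x\<in>S. t x = j} div l) :: 'd)" for j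
    by (metis dvd_mult_div_cancel of_nat_mult)
  moreover have "(\<Sum>x\<in>S. w (t x)) = (\<Sum>j\<in>t ` S. of_nat (card {x\<in>S. t x = j}) * w j)"
    by (subst sum.image_gen[OF fin, of _ t]) simp
  ultimately show ?thesis
    by (simp add: sum_distrib_left mult.assoc)
qed

section \<open>Algebraic integers from roots of unity\<close>

lemma power_mod_eq_if_power_eq_1:
  assumes "z ^ p = (1 :: 'a::monoid_mult)"
  shows "z ^ (n mod p) = z ^ n"
proof -
  have "z ^ n = z ^ (p * (n div p) + n mod p)"
    by simp
  also have "\<dots> = (z ^ p) ^ (n div p) * z ^ (n mod p)"
    by (simp only: power_add power_mult)
  finally show ?thesis using assms by simp
qed

lemma algebraic_int_sum_powers_root_of_unity:
  fixes z :: complex and c :: "nat \<Rightarrow> int"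
  assumes p: "p > 0" and z: "z ^ p = 1" and J: "finite J"
  shows "algebraic_int (\<Sum>j\<in>J. of_int (c j) * z ^ j)"
proof -
  define x where "x = (\<Sum>j\<in>J. of_int (c j) * z ^ j)"
  define A :: "int mat" where
    "A = mat p p (\<lambda>(r, s). \<Sum>j\<in>J. if (j + r) mod p = s then c j else 0)"
  define v where "v = vec p (\<lambda>s. z ^ s)"
  let ?B = "of_int_hom.mat_hom A :: complex mat"
  have A: "A \<in> carrier_mat p p" unfolding A_def by simp
  \<comment> \<open>\<open>x\<close> is an eigenvalue of the integer matrix \<open>A\<close>, hence a root of its monic characteristic polynomial\<close>
  have "?B *\<^sub>v v = x \<cdot>\<^sub>v v"
  proof (rule eq_vecI)
    fix r assume "r < dim_vec (x \<cdot>\<^sub>v v)"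
    then have r: "r < p" by (simp add: v_def)
    have "(?B *\<^sub>v v) $ r = (\<Sum>s<p. \<Sum>j\<in>J. if s = (j + r) mod p then of_int (c j) * z ^ s else 0)"
      using r by (auto simp: A_def v_def mult_mat_vec_def scalar_prod_def lessThan_atLeast0
          sum_distrib_right intro!: sum.cong)
    also have "\<dots> = (\<Sum>j\<in>J. of_int (c j) * z ^ ((j + r) mod p))"
      using p by (subst sum.swap) (simp add: sum.delta)
    also have "\<dots> = x * z ^ r"
      by (simp add: x_def sum_distrib_right power_mod_eq_if_power_eq_1[OF z] power_add mult.assoc)
    also have "\<dots> = (x \<cdot>\<^sub>v v) $ r"
      using r by (simp add: v_def)
    finally show "(?B *\<^sub>v v) $ r = (x \<cdot>\<^sub>v v) $ r" .
  qed (simp add: v_def A_def)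
  moreover have "v \<noteq> 0\<^sub>v p"
    using p by (auto simp: v_def vec_eq_iff)
  ultimately have "eigenvalue ?B x"
    unfolding eigenvalue_def eigenvector_def using A by (intro exI[of _ v]) (auto simp: v_def)
  then have "poly (char_poly ?B) x = 0"
    using eigenvalue_root_char_poly[of ?B p] A by simp
  then have "poly (of_int_poly (char_poly A)) x = 0"
    using of_int_hom.char_poly_hom[OF A] by metis
  moreover have "lead_coeff (of_int_poly (char_poly A) :: complex poly) = 1"
    using degree_monic_char_poly[OF A] by (simp add: degree_map_poly coeff_map_poly)
  ultimately show ?thesis
    unfolding x_def[symmetric]
    by (intro algebraic_int.intros[of "of_int_poly (char_poly A)"]) (auto simp: coeff_map_poly)
qed

section \<open>The character sums\<close>

lemma fpsi_cong: "ftrace F x = ftrace G y \<Longrightarrow> fpsi F x = fpsi G y"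
  by (simp add: fpsi_def)

lemma fpsi_eq_power:
  fixes F :: "'a::{finite,field} set"
  shows "fpsi F y = exp (2 * of_real pi * \<i> / of_nat CHAR('a)) ^
    (SOME t. t < CHAR('a) \<and> of_nat t = ftrace F y)"
  unfolding fpsi_def by (simp add: exp_of_nat_mult[symmetric] field_simps)

lemma exp_2pi_i_div_power_eq_1:
  assumes "n > 0"
  shows "exp (2 * of_real pi * \<i> / of_nat n) ^ n = 1"
proof -
  have "exp (2 * of_real pi * \<i> / of_nat n) ^ n = exp (of_nat n * (2 * of_real pi * \<i> / of_nat n))"
    by (rule exp_of_nat_mult[symmetric])
  also have "\<dots> = 1"
    using assms by simp
  finally show ?thesis .
qed

lemma of_nat_power_int_cong_CHAR_minus_1:
  assumes N: "(of_nat n :: 'a::{finite,field}) \<noteq> 0"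
    and cong: "[i = j] (mod (int CHAR('a) - 1))"
  shows "(of_nat n :: 'a) powi i = of_nat n powi j"
proof -
  let ?N = "of_nat n :: 'a" and ?p = "CHAR('a)"
  obtain p' where p': "?p = Suc p'"
    using prime_gt_0_nat[OF CHAR_prime[where 'a='a]] gr0_implies_Suc by blast
  have "?N * ?N ^ p' = ?N * 1"
    using frobenius_of_nat[where 'a='a, of n 1] by (simp add: p')
  then have "?N powi (int ?p - 1) = 1"
    using N by (simp add: p')
  moreover obtain s where "i - j = (int ?p - 1) * s"
    using cong by (auto simp: cong_iff_dvd_diff elim: dvdE)
  then have "i = j + (int ?p - 1) * s" by simp
  ultimately show ?thesis
    using N by (simp add: power_int_add power_int_mult)
qed

lemma sum_subfield_eq_Wsum:
  fixes K :: "'a::{finite,field} set"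
  assumes K: "is_subfield K" and a: "a \<in> K"
    and deg: "(of_nat (ext_deg K) :: 'a) \<noteq> 0"
    and de: "[d * e = 1] (mod (int CHAR('a) - 1))"
  shows "(\<Sum>x\<in>K. fpsi UNIV (x powi d + a * x))
    = Wsum K d ((of_nat (ext_deg K) :: 'a) powi (1 - e) * a)"
proof -
  define N where "N = (of_nat (ext_deg K) :: 'a)"
  define c where "c = N powi (- e)"
  have N: "N \<noteq> 0" using deg by (simp add: N_def)
  have "c \<noteq> 0" "c \<in> K"
    using N by (simp_all add: c_def N_def subfield_power_int[OF K] subfield_of_nat[OF K])
  have "[1 - e * d = 0] (mod (int CHAR('a) - 1))"
    using de cong_diff[OF cong_refl[of 1] de] by (simp add: mult.commute)
  have "N * c powi d = N * N powi (- e * d)"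
    unfolding c_def by (simp only: power_int_mult)
  also have "\<dots> = N powi (- e * d + 1)"
    by (rule power_int_add_1'[symmetric]) (simp add: N)
  also have "\<dots> = N powi 0"
    unfolding N_def using \<open>[1 - e * d = 0] (mod (int CHAR('a) - 1))\<close>
    by (intro of_nat_power_int_cong_CHAR_minus_1[OF deg]) simp
  finally have "N * c powi d = 1" by simp
  have "N * c = N powi (- e + 1)"
    unfolding c_def by (rule power_int_add_1'[symmetric]) (simp add: N)
  then have "N * c = N powi (1 - e)" by simp
  \<comment> \<open>rescaling by \<open>c\<close> absorbs the factor \<open>N = [L:K]\<close> introduced by the trace\<close>
  have rescale: "N * ((c * y) powi d + a * (c * y)) = y powi d + N powi (1 - e) * a * y" for y
  proof -
    have "N * ((c * y) powi d + a * (c * y)) = (N * c powi d) * y powi d + (N * c) * a * y"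
      by (simp add: power_int_mult_distrib algebra_simps)
    with \<open>N * c powi d = 1\<close> \<open>N * c = N powi (1 - e)\<close> show ?thesis by simp
  qed
  have "(\<Sum>x\<in>K. fpsi UNIV (x powi d + a * x)) = (\<Sum>x\<in>K. fpsi K (N * (x powi d + a * x)))"
    unfolding N_def using a
    by (intro sum.cong fpsi_cong ftrace_UNIV_subfield[OF K] refl)
      (simp add: subfield_add[OF K] subfield_mult[OF K] subfield_power_int[OF K])
  also have "\<dots> = (\<Sum>y\<in>K. fpsi K (N * ((c * y) powi d + a * (c * y))))"
    by (rule sum.reindex_bij_witness[of _ "\<lambda>y. c * y" "\<lambda>x. x / c"])
      (use \<open>c \<noteq> 0\<close> \<open>c \<in> K\<close> in \<open>simp_all add: subfield_mult[OF K] subfield_divide[OF K]\<close>)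
  also have "\<dots> = Wsum K d (N powi (1 - e) * a)"
    unfolding Wsum_def rescale by simp
  finally show ?thesis by (simp add: N_def)
qed

lemma funpow_power:
  fixes x :: "'a::monoid_mult"
  shows "((\<lambda>x. x ^ n) ^^ j) x = x ^ (n ^ j)"
  by (induction j) (simp_all add: power_mult[symmetric] mult.commute)

lemma power_card_notin_subfield:
  fixes K :: "'a::{finite,field} set"
  assumes K: "is_subfield K" and x: "x \<notin> K"
  shows "x ^ card K \<notin> K"
proof
  assume "x ^ card K \<in> K"
  have "ext_deg K > 0"
    using CARD_eq_card_subfield_power[OF K] card_subfield_gt_1[OF subfield_UNIV, where 'a='a]
    by (cases "ext_deg K") auto
  have "x = x ^ (card K ^ ext_deg K)"
    using subfield_power_card[OF subfield_UNIV, of x] CARD_eq_card_subfield_power[OF K] by simp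
  also have "\<dots> = (x ^ card K) ^ (card K ^ (ext_deg K - 1))"
    using \<open>ext_deg K > 0\<close> by (simp add: power_mult[symmetric] power_Suc[symmetric])
  also have "\<dots> \<in> K"
    using \<open>x ^ card K \<in> K\<close> by (rule subfield_power[OF K])
  finally show False using x by simp
qed

lemma power_card_subfield_frobenius:
  fixes K :: "'a::{finite,field} set"
  assumes K: "is_subfield K" and a: "a \<in> K"
  shows "(x ^ card K) powi d + a * x ^ card K = (x powi d + a * x) ^ (CHAR('a) ^ prime_deg K)"
proof -
  have "(x powi d + a * x) ^ (CHAR('a) ^ prime_deg K) = (x powi d) ^ card K + (a * x) ^ card K"
    unfolding card_subfield_eq_CHAR_power[OF K] by (rule frobenius_add)
  also have "\<dots> = (x ^ card K) powi d + a * x ^ card K"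
    using subfield_power_card[OF K a]
    by (simp add: power_mult_distrib power_int_power' power_int_power mult.commute)
  finally show ?thesis ..
qed

lemma sum_compl_subfield_prime_multiple:
  fixes K :: "'a::{finite,field} set"
  assumes K: "is_subfield K" and l: "prime l" and deg: "ext_deg K = l ^ k" and a: "a \<in> K"
  shows "\<exists>\<beta>. algebraic_int \<beta> \<and> (\<Sum>x\<in>-K. fpsi UNIV (x powi d + a * x)) = of_nat l * \<beta>"
proof -
  let ?p = "CHAR('a)" and ?frob = "\<lambda>x::'a. x ^ card K"
  define t where "t x = (SOME t. t < ?p \<and> of_nat t = ftrace UNIV (x powi d + a * x))" for x
  define \<zeta> where "\<zeta> = exp (2 * of_real pi * \<i> / of_nat ?p)"
  define \<beta> where "\<beta> = (\<Sum>j\<in>t ` (-K). of_int (int (card {x\<in>-K. t x = j} div l)) * \<zeta> ^ j)"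
  have period: "(?frob ^^ (l ^ k)) x = x" for x
    using subfield_power_card[OF subfield_UNIV, of x] CARD_eq_card_subfield_power[OF K]
    by (simp add: funpow_power deg)
  have moved: "?frob x \<noteq> x" if "x \<in> -K" for x
    using that subfield_power_card_iff[OF K] by simp
  have invariant: "t (?frob x) = t x" for x
    by (simp add: t_def power_card_subfield_frobenius[OF K a] ftrace_UNIV_power_CHAR_power)
  have "0 < ?p" by (rule prime_gt_0_nat[OF CHAR_prime])
  then have "algebraic_int \<beta>"
    unfolding \<beta>_def \<zeta>_def
    by (intro algebraic_int_sum_powers_root_of_unity[OF _ exp_2pi_i_div_power_eq_1]) auto
  moreover have "(\<Sum>x\<in>-K. fpsi UNIV (x powi d + a * x)) = (\<Sum>x\<in>-K. \<zeta> ^ t x)"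
    by (simp add: fpsi_eq_power t_def \<zeta>_def)
  moreover have "\<dots> = of_nat l * \<beta>"
    using sum_fixpoint_free_invariant[of "-K" l ?frob k t "\<lambda>j. \<zeta> ^ j"]
      l period moved invariant power_card_notin_subfield[OF K]
    by (simp add: \<beta>_def)
  ultimately show ?thesis by auto
qed

theorem lemma3p3:
  fixes K :: "'a::{finite,field} set" and l :: nat and d e :: int and a :: 'a
  assumes "is_subfield K"
    and "prime l" and "l \<noteq> CHAR('a)"
    and "\<exists>k. ext_deg K = l ^ k"
    and "gcd d (int CARD('a) - 1) = 1"
    and "[d * e = 1] (mod (int CHAR('a) - 1))"
    and "a \<in> K"
  shows "\<exists>\<beta>::complex. algebraic_int \<beta> \<and>
           Wsum (UNIV::'a set) d a
             - Wsum K d ((of_nat (ext_deg K) :: 'a) powi (1 - e) * a)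
           = of_nat l * \<beta>"
proof -
  obtain k where deg: "ext_deg K = l ^ k" using assms(4) by blast
  have "(of_nat (ext_deg K) :: 'a) \<noteq> 0"
  proof
    assume "(of_nat (ext_deg K) :: 'a) = 0"
    then have "CHAR('a) dvd l"
      using deg CHAR_prime[where 'a='a] by (simp add: of_nat_eq_0_iff_char_dvd prime_dvd_power_iff)
    with assms(3) show False
      using primes_dvd_imp_eq[OF CHAR_prime[where 'a='a] assms(2)] by simp
  qed
  then have "Wsum K d ((of_nat (ext_deg K) :: 'a) powi (1 - e) * a)
      = (\<Sum>x\<in>K. fpsi UNIV (x powi d + a * x))"
    using sum_subfield_eq_Wsum[OF assms(1,7) _ assms(6)] by simp
  moreover have "Wsum (UNIV::'a set) d a
      = (\<Sum>x\<in>-K. fpsi UNIV (x powi d + a * x)) + (\<Sum>x\<in>K. fpsi UNIV (x powi d + a * x))"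
    unfolding Wsum_def using sum.subset_diff[of K UNIV] by (simp add: Compl_eq_Diff_UNIV)
  moreover obtain \<beta> where "algebraic_int \<beta>" "(\<Sum>x\<in>-K. fpsi UNIV (x powi d + a * x)) = of_nat l * \<beta>"
    using sum_compl_subfield_prime_multiple[OF assms(1,2) deg assms(7)] by blast
  ultimately show ?thesis by auto
qed

end
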